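(* Let $\mathcal{D}$ be the arena of a $p$-periodic graph on $V$, and let $\mathcal{A}^*$ be its maximum augmented arena. Then $\mathcal{D}$ is copwin if and only if $\mathcal{A}^*$ contains an anchored star, i.e., there exist $t\in\mathbb{Z}_p$ and $u\in V$ such that $\Gamma_t(u,\mathcal{A}^* )=V$ and $(t,u)$ is anchored.
   Context: Let $V$ be a finite set and $p\ge 1$ an integer; $[t]_p$ denotes $t \bmod p$. A $p$-periodic graph $\mathcal{G}=(G_0,\dots,G_{p-1})^*$ is the infinite sequence of directed graphs $G_t=(V,E_{[t]_p})$, $t=0,1,2,\dots$, where $E_0,\dots,E_{p-1}\subseteq V\times V$ (self-loops allowed), each $G_i$ sinkless. An arena on $V$ of length $p$ is a directed graph with vertex set $\mathbb{Z}_p\times V$ (temporal nodes) all of whose edges have the form $((i,w),([i+1]_p,w'))$. The arena of $\mathcal{G}$ is the arena $\mathcal{D}$ with $((i,u),([i+1]_p,v))\in E(\mathcal{D})$ iff $(u,v)\in E_i$. Write $\Gamma_t(u,\mathcal{M})=\{v : ((t,u),([t+1]_p,v))\in E(\mathcal{M})\}$. Game: first the cop, then the robber choose vertices. In each round $t$, with cop at $c$ and robber at $r$, the cop must move to some $c'\in\Gamma_{[t]_p}(c,\mathcal{D})$; if $c'=r$ the cop wins; otherwise the robber must move to some $r'\in\Gamma_{[t]_p}(r,\mathcal{D})$ and the next round starts. A configuration $(t,c,r)$ ($t\in\mathbb{Z}_p$) is the state at the start of a round with index $\equiv t\pmod p$, cop at $c$, robber at $r$, cop to move; it is copwin if from it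 the cop can force capture in finitely many rounds against every robber strategy. $\mathcal{D}$ is copwin if there is $c\in V$ with $(0,c,r)$ copwin for all $r\in V$. An augmented arena of $\mathcal{D}$ is an arena $\mathcal{A}$ with $E(\mathcal{D})\subseteq E(\mathcal{A})$ such that for every edge $((t,x),([t+1]_p,y))\in E(\mathcal{A})$ the configuration $(t,x,y)$ is copwin. $\mathcal{A}^*$ denotes the maximum augmented arena, whose edge set is the union of the edge sets of all augmented arenas of $\mathcal{D}$. A temporal node $(t,u)$ is a star in an arena $\mathcal{A}$ if $\Gamma_t(u,\mathcal{A})=V$; it is anchored if there is a directed walk (possibly of length $0$) in $\mathcal{D}$ from some temporal node $(0,v)$ to $(t,u)$. *)

theory Defs
  imports Main
begin

type_synonym 'v tnode = "nat \<times> 'v"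
type_synonym 'v arena = "('v tnode \<times> 'v tnode) set"

definition periodic_graph :: "'v set \<Rightarrow> nat \<Rightarrow> (nat \<Rightarrow> ('v \<times> 'v) set) \<Rightarrow> bool" where
  "periodic_graph V p E \<longleftrightarrow> finite V \<and> p \<ge> 1 \<and>
     (\<forall>i<p. E i \<subseteq> V \<times> V \<and> (\<forall>u\<in>V. \<exists>v. (u, v) \<in> E i))"

definition is_arena :: "'v set \<Rightarrow> nat \<Rightarrow> 'v arena \<Rightarrow> bool" where
  "is_arena V p A \<longleftrightarrow>
     (\<forall>e\<in>A. \<exists>i w w'. i < p \<and> w \<in> V \<and> w' \<in> V \<and> e = ((i, w), ((i + 1) mod p, w')))"

definition arena_of :: "nat \<Rightarrow> (nat \<Rightarrow> ('v \<times> 'v) set) \<Rightarrow> 'v arena" where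
  "arena_of p E = {((i, u), ((i + 1) mod p, v)) | i u v. i < p \<and> (u, v) \<in> E i}"

definition Gamma :: "nat \<Rightarrow> nat \<Rightarrow> 'v \<Rightarrow> 'v arena \<Rightarrow> 'v set" where
  "Gamma p t u M = {v. ((t, u), ((t + 1) mod p, v)) \<in> M}"

text \<open>Copwin configurations (t, c, r) in arena D: the least set closed under the rule
  "the cop has a move c' from c with either c' = r, or c' \<noteq> r and every robber answer r'
   leads to a copwin configuration at the next time step" (cop can force capture in finitely many rounds).\<close>
inductive copwin_conf :: "'v set \<Rightarrow> nat \<Rightarrow> 'v arena \<Rightarrow> nat \<Rightarrow> 'v \<Rightarrow> 'v \<Rightarrow> bool"
  for V :: "'v set" and p :: nat and D :: "'v arena" where
  step: "\<lbrakk> t < p; c \<in> V; r \<in> V; c' \<in> Gamma p t c D;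
           c' = r \<or> (\<forall>r' \<in> Gamma p t r D. copwin_conf V p D ((t + 1) mod p) c' r') \<rbrakk>
         \<Longrightarrow> copwin_conf V p D t c r"

definition copwin :: "'v set \<Rightarrow> nat \<Rightarrow> 'v arena \<Rightarrow> bool" where
  "copwin V p D \<longleftrightarrow> (\<exists>c\<in>V. \<forall>r\<in>V. copwin_conf V p D 0 c r)"

definition augmented_arena :: "'v set \<Rightarrow> nat \<Rightarrow> 'v arena \<Rightarrow> 'v arena \<Rightarrow> bool" where
  "augmented_arena V p D A \<longleftrightarrow> is_arena V p A \<and> D \<subseteq> A \<and>
     (\<forall>t x t' y. ((t, x), (t', y)) \<in> A \<longrightarrow> copwin_conf V p D t x y)"

definition max_augmented_arena :: "'v set \<Rightarrow> nat \<Rightarrow> 'v arena \<Rightarrow> 'v arena" where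
  "max_augmented_arena V p D = \<Union>{A. augmented_arena V p D A}"

definition is_star :: "'v set \<Rightarrow> nat \<Rightarrow> 'v arena \<Rightarrow> nat \<Rightarrow> 'v \<Rightarrow> bool" where
  "is_star V p A t u \<longleftrightarrow> Gamma p t u A = V"

definition anchored :: "'v set \<Rightarrow> 'v arena \<Rightarrow> nat \<Rightarrow> 'v \<Rightarrow> bool" where
  "anchored V D t u \<longleftrightarrow> (\<exists>v\<in>V. ((0, v), (t, u)) \<in> D\<^sup>*)"

end

theory Submission
  imports Defs
begin

text \<open>A star \<open>(t, u)\<close> of \<open>\<A>\<^sup>*\<close> is exactly a position from which the cop, standing at \<open>u\<close> at
  time \<open>t\<close>, beats every robber: the edges of augmented arenas are copwin configurations, and
  conversely adding all edges out of such a position to \<open>\<D>\<close> gives an augmented arena.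
  Winning positions propagate backwards along edges of \<open>\<D>\<close>, since the cop may first walk
  along the edge and the robber's answer is irrelevant. Hence a star reachable from layer 0
  yields a winning start, and a winning start \<open>(0, c)\<close> is itself an anchored star.\<close>

definition copwin_from :: "'v set \<Rightarrow> nat \<Rightarrow> 'v arena \<Rightarrow> nat \<Rightarrow> 'v \<Rightarrow> bool" where
  "copwin_from V p D t c \<longleftrightarrow> (\<forall>r\<in>V. copwin_conf V p D t c r)"

lemma copwin_iff_copwin_from: "copwin V p D \<longleftrightarrow> (\<exists>c\<in>V. copwin_from V p D 0 c)"
  unfolding copwin_def copwin_from_def ..

lemma is_arena_edgeD:
  assumes "is_arena V p D" and "((t, x), (t', y)) \<in> D"
  shows "t < p" "x \<in> V" "y \<in> V" "t' = (t + 1) mod p"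
  using assms unfolding is_arena_def by fastforce+

lemma Gamma_subset_if_is_arena: "is_arena V p D \<Longrightarrow> Gamma p t x D \<subseteq> V"
  unfolding Gamma_def by (auto dest: is_arena_edgeD)

lemma is_arena_arena_of: "periodic_graph V p E \<Longrightarrow> is_arena V p (arena_of p E)"
  unfolding periodic_graph_def is_arena_def arena_of_def by blast

lemma is_arena_Union: "(\<And>A. A \<in> \<A> \<Longrightarrow> is_arena V p A) \<Longrightarrow> is_arena V p (\<Union>\<A>)"
  unfolding is_arena_def by blast

lemma copwin_conf_if_edge:
  assumes "is_arena V p D" and "((t, x), (t', y)) \<in> D"
  shows "copwin_conf V p D t x y"
proof (rule copwin_conf.step)
  show "t < p" "x \<in> V" "y \<in> V" using is_arena_edgeD[OF assms] by auto
  show "y \<in> Gamma p t x D"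
    using assms is_arena_edgeD(4)[OF assms] unfolding Gamma_def by simp
qed simp

lemma copwin_from_if_edge:
  assumes D: "is_arena V p D" and e: "((t, u), (t', v)) \<in> D"
    and win: "copwin_from V p D t' v"
  shows "copwin_from V p D t u"
  unfolding copwin_from_def
proof
  fix r assume r: "r \<in> V"
  note edge = is_arena_edgeD[OF D e]
  have "v \<in> Gamma p t u D" using e edge(4) unfolding Gamma_def by simp
  moreover have "\<forall>r'\<in>Gamma p t r D. copwin_conf V p D ((t + 1) mod p) v r'"
    using win Gamma_subset_if_is_arena[OF D] edge(4) unfolding copwin_from_def by blast
  ultimately show "copwin_conf V p D t u r"
    using copwin_conf.step[OF edge(1,2) r] by blast
qed

lemma copwin_from_if_walk:
  assumes D: "is_arena V p D" and walk: "(a, b) \<in> D\<^sup>*"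
    and win: "copwin_from V p D (fst b) (snd b)"
  shows "copwin_from V p D (fst a) (snd a)"
  using walk
proof (induction rule: converse_rtrancl_induct)
  case base
  show ?case using win .
next
  case (step a a')
  then show ?case
    using copwin_from_if_edge[OF D, of "fst a" "snd a" "fst a'" "snd a'"] by simp
qed

lemma augmented_arena_add_star:
  assumes D: "is_arena V p D" and "t < p" "u \<in> V" and win: "copwin_from V p D t u"
  shows "augmented_arena V p D (D \<union> {((t, u), ((t + 1) mod p, y)) | y. y \<in> V})"
  unfolding augmented_arena_def
proof (intro conjI allI impI)
  show "is_arena V p (D \<union> {((t, u), ((t + 1) mod p, y)) | y. y \<in> V})"
    using D \<open>t < p\<close> \<open>u \<in> V\<close> unfolding is_arena_def by blast
next
  fix t1 x t2 y
  assume "((t1, x), (t2, y)) \<in> D \<union> {((t, u), ((t + 1) mod p, y)) | y. y \<in> V}"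
  then show "copwin_conf V p D t1 x y"
    using copwin_conf_if_edge[OF D] win unfolding copwin_from_def by blast
qed simp

lemma is_arena_max_augmented_arena: "is_arena V p (max_augmented_arena V p D)"
  unfolding max_augmented_arena_def augmented_arena_def by (rule is_arena_Union) blast

lemma copwin_conf_if_max_augmented_edge:
  "((t, x), (t', y)) \<in> max_augmented_arena V p D \<Longrightarrow> copwin_conf V p D t x y"
  unfolding max_augmented_arena_def augmented_arena_def by blast

lemma is_star_max_augmented_arena_iff:
  assumes "is_arena V p D" and "t < p" "u \<in> V"
  shows "is_star V p (max_augmented_arena V p D) t u \<longleftrightarrow> copwin_from V p D t u"
proof
  assume star: "is_star V p (max_augmented_arena V p D) t u"
  show "copwin_from V p D t u"
    unfolding copwin_from_def
  proof
    fix r assume "r \<in> V"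
    then have "((t, u), ((t + 1) mod p, r)) \<in> max_augmented_arena V p D"
      using star unfolding is_star_def Gamma_def by blast
    then show "copwin_conf V p D t u r" by (rule copwin_conf_if_max_augmented_edge)
  qed
next
  assume "copwin_from V p D t u"
  then have aug: "augmented_arena V p D (D \<union> {((t, u), ((t + 1) mod p, y)) | y. y \<in> V})"
    using augmented_arena_add_star[OF assms] by simp
  have "V \<subseteq> Gamma p t u (max_augmented_arena V p D)"
  proof
    fix y assume "y \<in> V"
    then have "((t, u), ((t + 1) mod p, y)) \<in> D \<union> {((t, u), ((t + 1) mod p, y)) | y. y \<in> V}"
      by blast
    with aug show "y \<in> Gamma p t u (max_augmented_arena V p D)"
      unfolding Gamma_def max_augmented_arena_def by blast
  qed
  moreover have "Gamma p t u (max_augmented_arena V p D) \<subseteq> V"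
    by (rule Gamma_subset_if_is_arena[OF is_arena_max_augmented_arena])
  ultimately show "is_star V p (max_augmented_arena V p D) t u"
    unfolding is_star_def by (rule equalityI[rotated])
qed

theorem theorem1:
  fixes V :: "'v set" and p :: nat and E :: "nat \<Rightarrow> ('v \<times> 'v) set"
  assumes "periodic_graph V p E"
  shows "copwin V p (arena_of p E) \<longleftrightarrow>
         (\<exists>t<p. \<exists>u\<in>V. is_star V p (max_augmented_arena V p (arena_of p E)) t u
                        \<and> anchored V (arena_of p E) t u)"
proof -
  let ?D = "arena_of p E"
  have D: "is_arena V p ?D" using is_arena_arena_of[OF assms] .
  have "0 < p" using assms unfolding periodic_graph_def by simp
  have "(\<exists>c\<in>V. copwin_from V p ?D 0 c) \<longleftrightarrow>
        (\<exists>t<p. \<exists>u\<in>V. copwin_from V p ?D t u \<and> anchored V ?D t u)"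
  proof
    assume "\<exists>c\<in>V. copwin_from V p ?D 0 c"
    then show "\<exists>t<p. \<exists>u\<in>V. copwin_from V p ?D t u \<and> anchored V ?D t u"
      using \<open>0 < p\<close> unfolding anchored_def by blast
  next
    assume "\<exists>t<p. \<exists>u\<in>V. copwin_from V p ?D t u \<and> anchored V ?D t u"
    then show "\<exists>c\<in>V. copwin_from V p ?D 0 c"
      unfolding anchored_def using copwin_from_if_walk[OF D] by fastforce
  qed
  then show ?thesis
    unfolding copwin_iff_copwin_from using is_star_max_augmented_arena_iff[OF D] by blast
qed

end
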